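(* Fix $n=(n_{ji}: j\in i)$ with nonnegative integer entries. For $c\in\mathbb{N}$ let $M(nc,\cdot)$ be the network process started from $M(nc,0)=nc$ and let $\bar M(nc,t)=c^{-1}M(nc,ct)$. Then the family of processes $\{(\bar M(nc,t))_{t\ge0}\}_{c}$ is tight; more precisely, for every coordinate $(j,i)$ and every $T,\eta,\epsilon>0$ there exist $\delta>0$ and $c_0$ such that for all $c\ge c_0$, $\Pr\{\omega_{\bar M_{ji}(nc,\cdot)}(\delta)>\eta\}<\epsilon$, where $\omega_f(\delta)=\sup\{|f(t)-f(s)|: s,t\le T, |t-s|<\delta\}$.
   Context: Closed multiclass network: finite queue set $\mathcal{J}$, finite route set $\mathcal{I}$, each route $i$ a subset of $\mathcal{J}$ with a cyclic visiting order (each queue at most once), rates $\mu_{ji}>0$ for $j\in i$. The network process $M(t)=(M_{ji}(t): j\in i)$ is the continuous-time Markov chain in which, for each $i$ and $j\in i$ with $M_j>0$ (where $M_j=\sum_{i: j\in i}M_{ji}$), a route-$i$ customer leaves queue $j$ and joins the next queue on route $i$ at rate $\mu_{ji}M_{ji}/M_j$ (unit-rate processor sharing with exponential services). The number of route-$i$ customers is preserved. *)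

theory Defs
  imports "HOL-Probability.Probability"
begin

text \<open>Routes: route i is a (distinct) list of queues giving the cyclic visiting order.
  States: x :: 'q => 'r => nat, x j i = number of route-i customers at queue j.\<close>

definition nxt :: "'q list \<Rightarrow> 'q \<Rightarrow> 'q" where
  "nxt xs j = hd (tl (dropWhile (\<lambda>y. y \<noteq> j) (xs @ xs)))"

definition qlen :: "('q \<Rightarrow> 'r::finite \<Rightarrow> nat) \<Rightarrow> 'q \<Rightarrow> nat" where
  "qlen x j = (\<Sum>i\<in>UNIV. x j i)"

definition move :: "('r \<Rightarrow> 'q list) \<Rightarrow> ('q \<Rightarrow> 'r \<Rightarrow> nat) \<Rightarrow> 'q \<Rightarrow> 'r \<Rightarrow> ('q \<Rightarrow> 'r \<Rightarrow> nat)" where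
  "move route x j i = (\<lambda>q r. if r = i
      then x q r - (if q = j then 1 else 0) + (if q = nxt (route i) j then 1 else 0)
      else x q r)"

text \<open>Uniformisation rate: an upper bound for the total jump rate in every state.\<close>
definition unif_rate :: "('r::finite \<Rightarrow> 'q list) \<Rightarrow> ('q \<Rightarrow> 'r \<Rightarrow> real) \<Rightarrow> real" where
  "unif_rate route \<mu> = (\<Sum>i\<in>UNIV. \<Sum>j\<in>set (route i). \<mu> j i)"

definition event_pmf :: "('r::finite \<Rightarrow> 'q list) \<Rightarrow> ('q \<Rightarrow> 'r \<Rightarrow> real) \<Rightarrow> ('q \<times> 'r) pmf" where
  "event_pmf route \<mu> = embed_pmf (\<lambda>(j,i). if j \<in> set (route i) then \<mu> j i / unif_rate route \<mu> else 0)"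

text \<open>One step of the uniformised jump chain: candidate event (j,i) is accepted with
  probability M_ji / M_j (via the uniform variable u), giving the rate mu_ji M_ji / M_j.\<close>
definition step :: "('r::finite \<Rightarrow> 'q list) \<Rightarrow> ('q \<Rightarrow> 'r \<Rightarrow> nat) \<Rightarrow> 'q \<times> 'r \<Rightarrow> real \<Rightarrow> ('q \<Rightarrow> 'r \<Rightarrow> nat)" where
  "step route x e u = (case e of (j, i) \<Rightarrow>
      if j \<in> set (route i) \<and> 0 < x j i \<and> u < real (x j i) / real (qlen x j)
      then move route x j i else x)"

definition mark_measure :: "('r::finite \<Rightarrow> 'q list) \<Rightarrow> ('q \<Rightarrow> 'r \<Rightarrow> real) \<Rightarrow> (real \<times> ('q \<times> 'r) \<times> real) measure" where
  "mark_measure route \<mu> =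
     density lborel (exponential_density (unif_rate route \<mu>)) \<Otimes>\<^sub>M
       (measure_pmf (event_pmf route \<mu>) \<Otimes>\<^sub>M uniform_measure lborel {0..1})"

definition noise_space :: "('r::finite \<Rightarrow> 'q list) \<Rightarrow> ('q \<Rightarrow> 'r \<Rightarrow> real) \<Rightarrow> (real \<times> ('q \<times> 'r) \<times> real) stream measure" where
  "noise_space route \<mu> = stream_space (mark_measure route \<mu>)"

primrec jchain :: "('r::finite \<Rightarrow> 'q list) \<Rightarrow> ('q \<Rightarrow> 'r \<Rightarrow> nat) \<Rightarrow> (real \<times> ('q \<times> 'r) \<times> real) stream \<Rightarrow> nat \<Rightarrow> ('q \<Rightarrow> 'r \<Rightarrow> nat)" where
  "jchain route x0 \<omega> 0 = x0"
| "jchain route x0 \<omega> (Suc k) = step route (jchain route x0 \<omega> k) (fst (snd (\<omega> !! k))) (snd (snd (\<omega> !! k)))"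

definition jump_time :: "(real \<times> 'e) stream \<Rightarrow> nat \<Rightarrow> real" where
  "jump_time \<omega> k = (\<Sum>l<k. fst (\<omega> !! l))"

definition njumps :: "(real \<times> 'e) stream \<Rightarrow> real \<Rightarrow> nat" where
  "njumps \<omega> t = card {k. jump_time \<omega> (Suc k) \<le> t}"

definition net_proc :: "('r::finite \<Rightarrow> 'q list) \<Rightarrow> ('q \<Rightarrow> 'r \<Rightarrow> nat) \<Rightarrow> (real \<times> ('q \<times> 'r) \<times> real) stream \<Rightarrow> real \<Rightarrow> ('q \<Rightarrow> 'r \<Rightarrow> nat)" where
  "net_proc route x0 \<omega> t = jchain route x0 \<omega> (njumps \<omega> t)"

definition Mbar :: "('r::finite \<Rightarrow> 'q list) \<Rightarrow> ('q \<Rightarrow> 'r \<Rightarrow> nat) \<Rightarrow> nat \<Rightarrow> (real \<times> ('q \<times> 'r) \<times> real) stream \<Rightarrow> real \<Rightarrow> 'q \<Rightarrow> 'r \<Rightarrow> real" where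
  "Mbar route n c \<omega> t j i = real (net_proc route (\<lambda>q r. c * n q r) \<omega> (real c * t) j i) / real c"

definition modulus :: "(real \<Rightarrow> real) \<Rightarrow> real \<Rightarrow> real \<Rightarrow> real" where
  "modulus f T \<delta> = Sup {\<bar>f t - f s\<bar> | s t. s \<in> {0..T} \<and> t \<in> {0..T} \<and> \<bar>t - s\<bar> < \<delta>}"

end

theory Submission
  imports Defs "HOL-Real_Asymp.Real_Asymp"
begin

text \<open>Every accepted jump changes each coordinate of the network process by at most one, so the
  increment of a coordinate of the scaled process over a window of length \<open>\<delta>\<close> is at most
  \<open>1/c\<close> times the number of clock ticks of the uniformised chain in a window of length
  \<open>c\<delta>\<close>. The interarrival times are i.i.d. exponential with rate \<open>\<Lambda> = unif_rate route \<mu>\<close>;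
  at \<open>a = (e - 1)\<Lambda>\<close> each has Laplace transform \<open>1/e\<close>, so the Chernoff bound gives
  \<open>P(m ticks take time \<le> b) \<le> exp (a b - m)\<close>. With \<open>m \<approx> \<eta>c\<close> and \<open>\<delta> = \<eta>/(2a)\<close>, a union
  bound over the first \<open>N \<approx> (aT + 1)c\<close> ticks, plus the event that fewer than \<open>N\<close> ticks occur
  by time \<open>cT\<close>, leaves a probability of order \<open>c exp (-\<eta>c/2) + exp (-c)\<close>, which tends to 0.\<close>

lemma move_coordinate_diff: "\<bar>real (move route x j i q r) - real (x q r)\<bar> \<le> 1"
  unfolding move_def by (auto simp: of_nat_diff)

lemma step_coordinate_diff: "\<bar>real (step route x e u q r) - real (x q r)\<bar> \<le> 1"
  unfolding step_def using move_coordinate_diff by (cases e) auto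

lemma jchain_coordinate_diff:
  assumes "a \<le> b"
  shows "\<bar>real (jchain route x0 \<omega> b q r) - real (jchain route x0 \<omega> a q r)\<bar> \<le> real (b - a)"
  using assms
proof (induction b rule: dec_induct)
  case (step b)
  have "\<bar>real (jchain route x0 \<omega> (Suc b) q r) - real (jchain route x0 \<omega> b q r)\<bar> \<le> 1"
    by (simp add: step_coordinate_diff)
  with step show ?case by (simp add: of_nat_diff)
qed simp

lemma jump_time_mono:
  assumes "\<forall>l. 0 \<le> fst (\<omega> !! l)" "k \<le> k'"
  shows "jump_time \<omega> k \<le> jump_time \<omega> k'"
  unfolding jump_time_def using assms by (intro sum_mono2) auto

lemma jump_time_add_sdrop: "jump_time \<omega> (K + m) = jump_time \<omega> K + jump_time (sdrop K \<omega>) m"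
  unfolding jump_time_def by (induction m) (simp_all add: sdrop_snth)

lemma njumps_less_iff:
  assumes nonneg: "\<forall>l. 0 \<le> fst (\<omega> !! l)" and before: "x < jump_time \<omega> N"
  shows "k < njumps \<omega> x \<longleftrightarrow> jump_time \<omega> (Suc k) \<le> x"
proof -
  define B where "B = {k. jump_time \<omega> (Suc k) \<le> x}"
  have down: "k' \<in> B" if "k \<in> B" "k' \<le> k" for k k'
    using that jump_time_mono[OF nonneg, of "Suc k'" "Suc k"] unfolding B_def by auto
  have "N \<notin> B"
    using before jump_time_mono[OF nonneg, of N "Suc N"] unfolding B_def by auto
  define p where "p = (LEAST k. k \<notin> B)"
  have "B = {..<p}"
  proof (intro set_eqI iffI)
    fix k assume "k \<in> B"
    then show "k \<in> {..<p}"
      using down LeastI[of "\<lambda>k. k \<notin> B", OF \<open>N \<notin> B\<close>] unfolding p_def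
      by (meson lessThan_iff not_le)
  qed (auto simp: p_def dest: not_less_Least)
  then have "njumps \<omega> x = p"
    unfolding njumps_def B_def[symmetric] by simp
  with \<open>B = {..<p}\<close> show ?thesis
    unfolding B_def by auto
qed

lemma njumps_increment_le:
  assumes nonneg: "\<forall>l. 0 \<le> fst (\<omega> !! l)"
    and "x1 \<le> x2" and before: "x2 < jump_time \<omega> N"
    and gaps: "\<forall>K<N. x2 - x1 < jump_time (sdrop K \<omega>) m"
  shows "njumps \<omega> x1 \<le> njumps \<omega> x2" "njumps \<omega> x2 \<le> njumps \<omega> x1 + m"
proof -
  have "x1 < jump_time \<omega> N"
    using before \<open>x1 \<le> x2\<close> by simp
  then have less_iff1: "k < njumps \<omega> x1 \<longleftrightarrow> jump_time \<omega> (Suc k) \<le> x1" for k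
    using njumps_less_iff[OF nonneg] by blast
  have less_iff2: "k < njumps \<omega> x2 \<longleftrightarrow> jump_time \<omega> (Suc k) \<le> x2" for k
    using njumps_less_iff[OF nonneg before] .
  show "njumps \<omega> x1 \<le> njumps \<omega> x2"
    using less_iff1[of "njumps \<omega> x2"] less_iff2[of "njumps \<omega> x2"] \<open>x1 \<le> x2\<close> by linarith
  show "njumps \<omega> x2 \<le> njumps \<omega> x1 + m"
  proof (rule ccontr)
    assume "\<not> njumps \<omega> x2 \<le> njumps \<omega> x1 + m"
    define a where "a = njumps \<omega> x1"
    have late: "jump_time \<omega> (Suc a + m) \<le> x2"
      using less_iff2[of "a + m"] \<open>\<not> _ \<le> _\<close> unfolding a_def by simp
    have early: "x1 < jump_time \<omega> (Suc a)"
      using less_iff1[of a] unfolding a_def by simp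
    have "Suc a < N"
      using jump_time_mono[OF nonneg, of "Suc a" "Suc a + m"] jump_time_mono[OF nonneg, of N "Suc a"]
        late before by (meson le_add1 not_less order.trans)
    then have "x2 - x1 < jump_time (sdrop (Suc a) \<omega>) m"
      using gaps by blast
    with late early jump_time_add_sdrop[of \<omega> "Suc a" m] show False
      by linarith
  qed
qed

lemma modulus_le:
  assumes "0 \<le> T" "0 < \<delta>"
    and "\<And>s t. 0 \<le> s \<Longrightarrow> s \<le> t \<Longrightarrow> t \<le> T \<Longrightarrow> t - s < \<delta> \<Longrightarrow> \<bar>f t - f s\<bar> \<le> B"
  shows "modulus f T \<delta> \<le> B"
  unfolding modulus_def
proof (rule cSup_least)
  show "{\<bar>f t - f s\<bar> |s t. s \<in> {0..T} \<and> t \<in> {0..T} \<and> \<bar>t - s\<bar> < \<delta>} \<noteq> {}"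
    using assms(1,2) by (auto intro!: exI[of _ 0])
next
  fix x assume "x \<in> {\<bar>f t - f s\<bar> |s t. s \<in> {0..T} \<and> t \<in> {0..T} \<and> \<bar>t - s\<bar> < \<delta>}"
  then obtain s t where "x = \<bar>f t - f s\<bar>" "s \<in> {0..T}" "t \<in> {0..T}" "\<bar>t - s\<bar> < \<delta>"
    by blast
  then show "x \<le> B"
    using assms(3)[of s t] assms(3)[of t s] by (cases "s \<le> t") (auto simp: abs_minus_commute)
qed

lemma modulus_Mbar_le:
  assumes nonneg: "\<forall>l. 0 \<le> fst (\<omega> !! l)" and "0 < c" "0 \<le> T" "0 < \<delta>"
    and before: "real c * T < jump_time \<omega> N"
    and gaps: "\<forall>K<N. real c * \<delta> < jump_time (sdrop K \<omega>) m"
  shows "modulus (\<lambda>t. Mbar route n c \<omega> t j i) T \<delta> \<le> real m / real c"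
proof (rule modulus_le[OF \<open>0 \<le> T\<close> \<open>0 < \<delta>\<close>])
  fix s t assume st: "0 \<le> s" "s \<le> t" "t \<le> T" "t - s < \<delta>"
  have "real c * t - real c * s < real c * \<delta>"
    using st \<open>0 < c\<close> by (simp flip: right_diff_distrib)
  moreover have "real c * s \<le> real c * t" "real c * t < jump_time \<omega> N"
    using st \<open>0 < c\<close> before by (auto intro: order.strict_trans1[OF mult_left_mono])
  ultimately obtain a b where ab: "a \<le> b" "b \<le> a + m"
    and a: "a = njumps \<omega> (real c * s)" and b: "b = njumps \<omega> (real c * t)"
    using njumps_increment_le[OF nonneg, of "real c * s" "real c * t" N m] gaps by force
  define x0 where "x0 = (\<lambda>q r. c * n q r)"
  have "\<bar>Mbar route n c \<omega> t j i - Mbar route n c \<omega> s j i\<bar>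
      = \<bar>real (jchain route x0 \<omega> b j i) - real (jchain route x0 \<omega> a j i)\<bar> / real c"
    unfolding Mbar_def net_proc_def a b x0_def by (simp flip: diff_divide_distrib)
  also have "\<dots> \<le> real (b - a) / real c"
    by (intro divide_right_mono jchain_coordinate_diff ab) auto
  also have "\<dots> \<le> real m / real c"
    using ab by (intro divide_right_mono) auto
  finally show "\<bar>Mbar route n c \<omega> t j i - Mbar route n c \<omega> s j i\<bar> \<le> real m / real c" .
qed

lemma (in prob_space) nn_integral_stream_space_sdrop:
  assumes [measurable]: "f \<in> borel_measurable (stream_space M)"
  shows "(\<integral>\<^sup>+\<omega>. f (sdrop K \<omega>) \<partial>stream_space M) = (\<integral>\<^sup>+\<omega>. f \<omega> \<partial>stream_space M)"
proof (induction K)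
  case (Suc K)
  have "(\<integral>\<^sup>+\<omega>. f (sdrop (Suc K) \<omega>) \<partial>stream_space M)
      = (\<integral>\<^sup>+x. (\<integral>\<^sup>+\<omega>. f (sdrop K \<omega>) \<partial>stream_space M) \<partial>M)"
    by (subst nn_integral_stream_space) simp_all
  also have "\<dots> = (\<integral>\<^sup>+\<omega>. f \<omega> \<partial>stream_space M)"
    using Suc by (simp add: emeasure_space_1)
  finally show ?case .
qed simp

lemma measurable_jump_time[measurable]:
  assumes [measurable]: "fst \<in> borel_measurable M"
  shows "(\<lambda>\<omega>. jump_time \<omega> m) \<in> borel_measurable (stream_space M)"
  unfolding jump_time_def by measurable

lemma nn_integral_exp_jump_time:
  assumes "prob_space M" and [measurable]: "fst \<in> borel_measurable M"
    and laplace: "(\<integral>\<^sup>+x. ennreal (exp (- a * fst x)) \<partial>M) = q"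
  shows "(\<integral>\<^sup>+\<omega>. ennreal (exp (- a * jump_time \<omega> m)) \<partial>stream_space M) = q ^ m"
proof (induction m)
  interpret prob_space M by fact
  case 0
  show ?case by (simp add: jump_time_def prob_space.emeasure_space_1 prob_space_stream_space)
next
  interpret prob_space M by fact
  case (Suc m)
  have split: "ennreal (exp (- a * jump_time (x ## X) (Suc m)))
      = ennreal (exp (- a * fst x)) * ennreal (exp (- a * jump_time X m))" for x X
    unfolding jump_time_def sum.lessThan_Suc_shift
    by (simp add: ring_distribs exp_add[symmetric] ennreal_mult[symmetric])
  have "(\<integral>\<^sup>+\<omega>. ennreal (exp (- a * jump_time \<omega> (Suc m))) \<partial>stream_space M)
      = (\<integral>\<^sup>+x. (\<integral>\<^sup>+X. ennreal (exp (- a * jump_time (x ## X) (Suc m))) \<partial>stream_space M) \<partial>M)"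
    by (rule nn_integral_stream_space) measurable
  also have "\<dots> = (\<integral>\<^sup>+x. ennreal (exp (- a * fst x))
                * (\<integral>\<^sup>+X. ennreal (exp (- a * jump_time X m)) \<partial>stream_space M) \<partial>M)"
    unfolding split by (intro nn_integral_cong nn_integral_cmult) measurable
  also have "\<dots> = q ^ Suc m"
    using Suc laplace by (simp add: nn_integral_multc)
  finally show ?case .
qed

lemma prob_jump_time_sdrop_le:
  assumes "prob_space M" and [measurable]: "fst \<in> borel_measurable M" and "0 < a"
    and laplace: "(\<integral>\<^sup>+x. ennreal (exp (- a * fst x)) \<partial>M) = ennreal q" and "0 \<le> q"
  shows "measure (stream_space M) {\<omega> \<in> space (stream_space M). jump_time (sdrop K \<omega>) m \<le> b}
           \<le> exp (a * b) * q ^ m"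
proof -
  interpret prob_space M by fact
  let ?S = "stream_space M"
  have "emeasure ?S {\<omega> \<in> space ?S. jump_time (sdrop K \<omega>) m \<le> b}
      \<le> ennreal (exp (a * b))
          * (\<integral>\<^sup>+\<omega>. ennreal (exp (- a * jump_time (sdrop K \<omega>) m)) * indicator (space ?S) \<omega> \<partial>?S)"
    by (rule Chernoff_ineq_nn_integral_le) (use \<open>0 < a\<close> in simp_all)
  also have "(\<integral>\<^sup>+\<omega>. ennreal (exp (- a * jump_time (sdrop K \<omega>) m)) * indicator (space ?S) \<omega> \<partial>?S)
      = (\<integral>\<^sup>+\<omega>. ennreal (exp (- a * jump_time (sdrop K \<omega>) m)) \<partial>?S)"
    by (intro nn_integral_cong) simp
  also have "\<dots> = (\<integral>\<^sup>+\<omega>. ennreal (exp (- a * jump_time \<omega> m)) \<partial>?S)"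
    by (rule nn_integral_stream_space_sdrop) measurable
  also have "\<dots> = ennreal (q ^ m)"
    using nn_integral_exp_jump_time[OF \<open>prob_space M\<close> _ laplace] \<open>0 \<le> q\<close>
    by (simp add: ennreal_power)
  finally show ?thesis
    using \<open>0 \<le> q\<close> by (simp add: measure_def enn2real_leI flip: ennreal_mult)
qed

lemma unif_rate_pos:
  assumes "\<forall>i. \<forall>j\<in>set (route i). 0 < \<mu> j i" and "j \<in> set (route i)"
  shows "0 < unif_rate route \<mu>"
proof -
  have "0 < (\<Sum>j\<in>set (route i). \<mu> j i)"
    using assms by (intro sum_pos2[of _ j]) (auto intro: less_imp_le)
  also have "\<dots> \<le> unif_rate route \<mu>"
    unfolding unif_rate_def using assms(1)
    by (intro member_le_sum sum_nonneg) (auto intro: less_imp_le)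
  finally show ?thesis .
qed

lemma prob_space_mark_measure:
  "0 < unif_rate route \<mu> \<Longrightarrow> prob_space (mark_measure route \<mu>)"
  unfolding mark_measure_def
  by (intro prob_space_pair prob_space_exponential_density prob_space_measure_pmf
        prob_space_uniform_measure) auto

lemma nn_integral_exp_exponential_density:
  fixes l a :: real
  assumes "0 < l" "0 \<le> a"
  shows "(\<integral>\<^sup>+x. ennreal (exp (- a * x)) \<partial>density lborel (exponential_density l))
           = ennreal (l / (l + a))"
proof -
  interpret prob_space "density lborel (exponential_density (l + a))"
    using assms by (intro prob_space_exponential_density) auto
  have "(\<integral>\<^sup>+x. ennreal (exp (- a * x)) \<partial>density lborel (exponential_density l))
      = (\<integral>\<^sup>+x. ennreal (l / (l + a)) * ennreal (exponential_density (l + a) x) \<partial>lborel)"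
    using assms
    by (subst nn_integral_density)
       (auto intro!: nn_integral_cong
             simp: exponential_density_def ennreal_mult[symmetric] exp_add[symmetric] field_simps)
  also have "\<dots> = ennreal (l / (l + a)) * emeasure (density lborel (exponential_density (l + a))) UNIV"
    by (subst nn_integral_cmult) (auto simp: emeasure_density)
  finally show ?thesis
    using emeasure_space_1 by simp
qed

lemma nn_integral_pair_measure_fst:
  assumes "prob_space M2" and [measurable]: "g \<in> borel_measurable M1"
  shows "(\<integral>\<^sup>+z. g (fst z) \<partial>(M1 \<Otimes>\<^sub>M M2)) = (\<integral>\<^sup>+x. g x \<partial>M1)"
proof -
  interpret prob_space M2 by fact
  have "(\<integral>\<^sup>+z. g (fst z) \<partial>(M1 \<Otimes>\<^sub>M M2)) = (\<integral>\<^sup>+x. \<integral>\<^sup>+y. g (fst (x, y)) \<partial>M2 \<partial>M1)"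
    by (rule nn_integral_fst[symmetric]) measurable
  then show ?thesis
    by (simp add: emeasure_space_1)
qed

lemma measurable_fst_mark_measure[measurable]: "fst \<in> borel_measurable (mark_measure route \<mu>)"
  unfolding mark_measure_def by measurable

lemma mark_measure_laplace:
  assumes "0 < unif_rate route \<mu>" "0 \<le> a"
  shows "(\<integral>\<^sup>+x. ennreal (exp (- a * fst x)) \<partial>mark_measure route \<mu>)
           = ennreal (unif_rate route \<mu> / (unif_rate route \<mu> + a))"
proof -
  have "prob_space (measure_pmf (event_pmf route \<mu>) \<Otimes>\<^sub>M uniform_measure lborel {0..1::real})"
    by (intro prob_space_pair prob_space_measure_pmf prob_space_uniform_measure) auto
  then show ?thesis
    unfolding mark_measure_def
    by (subst nn_integral_pair_measure_fst[where g = "\<lambda>x. ennreal (exp (- a * x))"])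
       (use nn_integral_exp_exponential_density[OF assms] in simp_all)
qed

lemma AE_mark_measure_nonneg:
  assumes "0 < unif_rate route \<mu>"
  shows "AE x in mark_measure route \<mu>. 0 \<le> fst x"
proof -
  let ?M1 = "density lborel (exponential_density (unif_rate route \<mu>))"
  let ?M2 = "measure_pmf (event_pmf route \<mu>) \<Otimes>\<^sub>M uniform_measure lborel {0..1::real}"
  interpret M1: prob_space ?M1
    using assms by (rule prob_space_exponential_density)
  interpret M2: prob_space ?M2
    by (intro prob_space_pair prob_space_measure_pmf prob_space_uniform_measure) auto
  interpret pair_sigma_finite ?M1 ?M2 ..
  have "AE x in ?M1. 0 \<le> x"
    by (subst AE_density) (auto simp: exponential_density_def)
  moreover have "{z \<in> space (?M1 \<Otimes>\<^sub>M ?M2). 0 \<le> fst z} \<in> sets (?M1 \<Otimes>\<^sub>M ?M2)"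
    by measurable
  ultimately have "AE z in ?M1 \<Otimes>\<^sub>M ?M2. 0 \<le> fst z"
    by (intro AE_pair_measure) (auto elim: eventually_mono)
  then show ?thesis
    unfolding mark_measure_def .
qed

lemma AE_noise_space_nonneg:
  assumes "0 < unif_rate route \<mu>"
  shows "AE \<omega> in noise_space route \<mu>. \<forall>l. 0 \<le> fst (\<omega> !! l)"
proof -
  interpret prob_space "mark_measure route \<mu>"
    using assms by (rule prob_space_mark_measure)
  show ?thesis
    using AE_stream_all[OF _ AE_mark_measure_nonneg[OF assms]]
    unfolding noise_space_def stream_all_def by simp
qed

lemma noise_space_jump_time_tail:
  assumes "0 < unif_rate route \<mu>"
  defines "a \<equiv> (exp 1 - 1) * unif_rate route \<mu>"
  shows "measure (noise_space route \<mu>)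
           {\<omega> \<in> space (noise_space route \<mu>). jump_time (sdrop K \<omega>) m \<le> b}
           \<le> exp (a * b - real m)"
proof -
  have "0 < a"
    unfolding a_def using assms(1) by simp
  have "unif_rate route \<mu> / (unif_rate route \<mu> + a) = exp (-1)"
    unfolding a_def using assms(1) by (simp add: exp_minus field_simps)
  then have laplace: "(\<integral>\<^sup>+x. ennreal (exp (- a * fst x)) \<partial>mark_measure route \<mu>) = ennreal (exp (-1))"
    using mark_measure_laplace[OF assms(1), of a] \<open>0 < a\<close> by simp
  have "measure (noise_space route \<mu>)
           {\<omega> \<in> space (noise_space route \<mu>). jump_time (sdrop K \<omega>) m \<le> b} \<le> exp (a * b) * exp (-1) ^ m"
    unfolding noise_space_def
    by (rule prob_jump_time_sdrop_le[OF prob_space_mark_measure[OF assms(1)] _ \<open>0 < a\<close> laplace]) simp_all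
  also have "\<dots> = exp (a * b - real m)"
    by (simp add: exp_diff exp_minus exp_of_nat_mult[symmetric] power_inverse divide_inverse)
  finally show ?thesis .
qed

lemma measure_late_or_crowded_ticks_le:
  assumes "0 < unif_rate route \<mu>"
  defines "a \<equiv> (exp 1 - 1) * unif_rate route \<mu>"
  shows "measure (noise_space route \<mu>)
           ({\<omega> \<in> space (noise_space route \<mu>). jump_time \<omega> N \<le> b}
            \<union> (\<Union>K<N. {\<omega> \<in> space (noise_space route \<mu>). jump_time (sdrop K \<omega>) m \<le> d}))
           \<le> exp (a * b - real N) + real N * exp (a * d - real m)"
proof -
  let ?P = "noise_space route \<mu>"
  have crowded: "measure ?P {\<omega> \<in> space ?P. jump_time (sdrop K \<omega>) m \<le> d} \<le> exp (a * d - real m)" for K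
    using noise_space_jump_time_tail[OF assms(1)] unfolding a_def .
  have "measure ?P ({\<omega> \<in> space ?P. jump_time \<omega> N \<le> b}
          \<union> (\<Union>K<N. {\<omega> \<in> space ?P. jump_time (sdrop K \<omega>) m \<le> d}))
      \<le> measure ?P {\<omega> \<in> space ?P. jump_time \<omega> N \<le> b}
          + measure ?P (\<Union>K<N. {\<omega> \<in> space ?P. jump_time (sdrop K \<omega>) m \<le> d})"
    unfolding noise_space_def by (intro measure_Un_le) auto
  also have "\<dots> \<le> exp (a * b - real N)
      + (\<Sum>K<N. measure ?P {\<omega> \<in> space ?P. jump_time (sdrop K \<omega>) m \<le> d})"
    using noise_space_jump_time_tail[OF assms(1), of 0 N b] unfolding a_def noise_space_def
    by (intro add_mono measure_UNION_le) auto
  also have "\<dots> \<le> exp (a * b - real N) + real N * exp (a * d - real m)"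
    using sum_bounded_above[of "{..<N}" _ "exp (a * d - real m)", OF crowded] by simp
  finally show ?thesis .
qed

lemma modulus_Mbar_tail:
  fixes c :: nat
  assumes "0 < unif_rate route \<mu>" "0 < T" "0 < \<eta>" "1 \<le> c"
  defines "\<alpha> \<equiv> (exp 1 - 1) * unif_rate route \<mu>"
  shows "\<exists>A\<in>sets (noise_space route \<mu>).
           {\<omega> \<in> space (noise_space route \<mu>).
              \<eta> < modulus (\<lambda>t. Mbar route n c \<omega> t j i) T (\<eta> / (2 * \<alpha>))} \<subseteq> A
           \<and> measure (noise_space route \<mu>) A
               \<le> exp (- real c) + ((\<alpha> * T + 1) * real c + 1) * exp (1 - \<eta> * real c / 2)"
proof -
  let ?P = "noise_space route \<mu>"
  have "0 < \<alpha>"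
    unfolding \<alpha>_def using assms(1) by simp
  define \<delta> where "\<delta> = \<eta> / (2 * \<alpha>)"
  have "0 < \<delta>" and \<alpha>\<delta>: "\<alpha> * (real c * \<delta>) = \<eta> * real c / 2"
    unfolding \<delta>_def using \<open>0 < \<alpha>\<close> \<open>0 < \<eta>\<close> by (simp_all add: field_simps)
  define N where "N = nat \<lceil>(\<alpha> * T + 1) * real c\<rceil>"
  define m where "m = nat \<lfloor>\<eta> * real c\<rfloor>"
  have "0 \<le> (\<alpha> * T + 1) * real c"
    using \<open>0 < \<alpha>\<close> \<open>0 < T\<close> by simp
  then have N: "(\<alpha> * T + 1) * real c \<le> real N" "real N \<le> (\<alpha> * T + 1) * real c + 1"
    unfolding N_def by linarith+
  have "0 \<le> \<eta> * real c"
    using \<open>0 < \<eta>\<close> by simp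
  then have m: "\<eta> * real c - 1 \<le> real m" "real m \<le> \<eta> * real c"
    unfolding m_def by linarith+
  obtain N0 where N0: "{\<omega> \<in> space ?P. \<not> (\<forall>l. 0 \<le> fst (\<omega> !! l))} \<subseteq> N0"
    "emeasure ?P N0 = 0" "N0 \<in> sets ?P"
    using AE_noise_space_nonneg[OF assms(1)] by (rule AE_E)
  define B where "B = {\<omega> \<in> space ?P. jump_time \<omega> N \<le> real c * T}
    \<union> (\<Union>K<N. {\<omega> \<in> space ?P. jump_time (sdrop K \<omega>) m \<le> real c * \<delta>})"
  have "B \<in> sets ?P"
    unfolding B_def noise_space_def by measurable
  have incl: "{\<omega> \<in> space ?P. \<eta> < modulus (\<lambda>t. Mbar route n c \<omega> t j i) T \<delta>} \<subseteq> N0 \<union> B"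
  proof (intro subsetI CollectI, elim CollectE conjE, rule ccontr)
    fix \<omega> assume "\<omega> \<in> space ?P" "\<eta> < modulus (\<lambda>t. Mbar route n c \<omega> t j i) T \<delta>" "\<omega> \<notin> N0 \<union> B"
    moreover from this have "\<forall>l. 0 \<le> fst (\<omega> !! l)"
      using N0(1) by auto
    ultimately have "modulus (\<lambda>t. Mbar route n c \<omega> t j i) T \<delta> \<le> real m / real c"
      using \<open>1 \<le> c\<close> \<open>0 < T\<close> \<open>0 < \<delta>\<close> by (intro modulus_Mbar_le) (auto simp: B_def not_le)
    also have "\<dots> \<le> \<eta>"
      using m(2) \<open>1 \<le> c\<close> by (simp add: divide_le_eq mult.commute)
    finally show False
      using \<open>\<eta> < _\<close> by simp
  qed
  have "measure ?P (N0 \<union> B) \<le> measure ?P B"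
    using measure_Un_le[OF N0(3) \<open>B \<in> sets ?P\<close>] N0(2) by (simp add: measure_def)
  also have "\<dots> \<le> exp (\<alpha> * (real c * T) - real N) + real N * exp (\<alpha> * (real c * \<delta>) - real m)"
    unfolding B_def \<alpha>_def using assms(1) by (rule measure_late_or_crowded_ticks_le)
  also have "\<dots> \<le> exp (- real c) + ((\<alpha> * T + 1) * real c + 1) * exp (1 - \<eta> * real c / 2)"
  proof (intro add_mono mult_mono)
    show "exp (\<alpha> * (real c * T) - real N) \<le> exp (- real c)"
      using N(1) by (simp add: algebra_simps)
    show "exp (\<alpha> * (real c * \<delta>) - real m) \<le> exp (1 - \<eta> * real c / 2)"
      unfolding \<alpha>\<delta> using m(1) by simp
  qed (use N(2) in simp_all)
  finally show ?thesis
    unfolding \<delta>_def[symmetric]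
    using incl N0(3) \<open>B \<in> sets ?P\<close> by (intro bexI[of _ "N0 \<union> B"] conjI) simp_all
qed

lemma eventually_tail_bound_less:
  fixes C \<eta> \<epsilon> :: real
  assumes "0 < \<eta>" "0 < \<epsilon>"
  shows "eventually (\<lambda>c. exp (- real c) + (C * real c + 1) * exp (1 - \<eta> * real c / 2) < \<epsilon>) sequentially"
proof -
  have "((\<lambda>x::real. exp (- x)) \<longlongrightarrow> 0) at_top"
    by real_asymp
  moreover have "((\<lambda>x. (C * x + 1) * exp (1 - \<eta> * x / 2)) \<longlongrightarrow> 0) at_top"
    using \<open>0 < \<eta>\<close> by real_asymp
  ultimately have "((\<lambda>x. exp (- x) + (C * x + 1) * exp (1 - \<eta> * x / 2)) \<longlongrightarrow> 0) at_top"
    using tendsto_add by fastforce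
  then show ?thesis
    using \<open>0 < \<epsilon>\<close> by (intro order_tendstoD(2) filterlim_compose[OF _ filterlim_real_sequentially])
qed

theorem proposition4:
  fixes route :: "'r::finite \<Rightarrow> 'q::finite list"
    and \<mu> :: "'q \<Rightarrow> 'r \<Rightarrow> real"
    and n :: "'q \<Rightarrow> 'r \<Rightarrow> nat"
    and j :: 'q and i :: 'r and T \<eta> \<epsilon> :: real
  assumes "\<forall>i. distinct (route i)"
    and "\<forall>i. \<forall>j\<in>set (route i). 0 < \<mu> j i"
    and "\<forall>i j. j \<notin> set (route i) \<longrightarrow> n j i = 0"
    and "j \<in> set (route i)"
    and "0 < T" and "0 < \<eta>" and "0 < \<epsilon>"
  shows "\<exists>\<delta>>0. \<exists>c0::nat. \<forall>c\<ge>c0. \<exists>A\<in>sets (noise_space route \<mu>).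
           {\<omega> \<in> space (noise_space route \<mu>).
              \<eta> < modulus (\<lambda>t. Mbar route n c \<omega> t j i) T \<delta>} \<subseteq> A
           \<and> measure (noise_space route \<mu>) A < \<epsilon>"
proof -
  have "0 < unif_rate route \<mu>"
    using assms(2,4) by (rule unif_rate_pos)
  define \<alpha> where "\<alpha> = (exp 1 - 1) * unif_rate route \<mu>"
  have "0 < \<eta> / (2 * \<alpha>)"
    unfolding \<alpha>_def using \<open>0 < unif_rate route \<mu>\<close> \<open>0 < \<eta>\<close> by simp
  obtain c1 where
    "\<And>c. c1 \<le> c \<Longrightarrow> exp (- real c) + ((\<alpha> * T + 1) * real c + 1) * exp (1 - \<eta> * real c / 2) < \<epsilon>"
    using eventually_tail_bound_less[OF \<open>0 < \<eta>\<close> \<open>0 < \<epsilon>\<close>] unfolding eventually_sequentially by blast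
  then have tail: "\<exists>A\<in>sets (noise_space route \<mu>).
           {\<omega> \<in> space (noise_space route \<mu>).
              \<eta> < modulus (\<lambda>t. Mbar route n c \<omega> t j i) T (\<eta> / (2 * \<alpha>))} \<subseteq> A
           \<and> measure (noise_space route \<mu>) A < \<epsilon>" if "max c1 1 \<le> c" for c
    using modulus_Mbar_tail[OF \<open>0 < unif_rate route \<mu>\<close> \<open>0 < T\<close> \<open>0 < \<eta>\<close>, of c n j i] that
    unfolding \<alpha>_def[symmetric] by (meson max.bounded_iff order.strict_trans1)
  with \<open>0 < \<eta> / (2 * \<alpha>)\<close> show ?thesis
    by blast
qed

end
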